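(* Let $F$, $\hat F$, $\alpha_1,\dots,\alpha_n$ and $\pi: H_1(\hat F,\mathbb{Z})\to H_1(F,\mathbb{Z})$ be as in the context. For every automorphism $\varphi: H_1(F,\mathbb{Z})\to H_1(F,\mathbb{Z})$ there is an automorphism $\tilde\varphi: H_1(\hat F,\mathbb{Z})\to H_1(\hat F,\mathbb{Z})$ with $\pi\circ\tilde\varphi=\varphi\circ\pi$ and $\tilde\varphi\left(\sum_{i=1}^n\alpha_i\right)=\sum_{i=1}^n\alpha_i$.
   Context: $F$ is a closed connected non-orientable surface with Euler characteristic $\chi(F)=2-n$, $n\ge 1$, written as a connected sum of $n$ projective planes. $\hat F$ is obtained from $F$ by deleting the interior of an embedded disc, so $\hat F$ is a boundary-connected sum of $n$ Möbius bands $\mathcal{M}_1,\dots,\mathcal{M}_n$. Let $\gamma_i$ be the core (central) circle of $\mathcal{M}_i$ and $\alpha_i=[\gamma_i]\in H_1(\hat F,\mathbb{Z})$ (for some choice of orientation). Then $H_1(\hat F,\mathbb{Z})\cong\mathbb{Z}^n$ with basis $\alpha_1,\dots,\alpha_n$, and the map $\pi:H_1(\hat F,\mathbb{Z})\to H_1(F,\mathbb{Z})$ induced by inclusion is surjective with kernel generated by $2\sum_i\alpha_i$ (the class of the boundary circle), so $H_1(F,\mathbb{Z})=H_1(\hat F,\mathbb{Z})/\langle 2\sum_i\alpha_i\rangle$. *)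

theory Defs
  imports "HOL-Algebra.Algebra"
begin

text \<open>H_1(F^,Z) = Z^n, realised as integer vectors
  nat => int supported on {0..<n}; the basis vector alpha i (i < n) is the class
  of the core circle of the i-th Moebius band.\<close>

definition H1hat :: "nat \<Rightarrow> (nat \<Rightarrow> int) monoid" where
  "H1hat n = \<lparr>carrier = {v. \<forall>i\<ge>n. v i = 0}, monoid.mult = (\<lambda>x y. (\<lambda>i. x i + y i)), one = (\<lambda>i. 0)\<rparr>"

definition alpha :: "nat \<Rightarrow> nat \<Rightarrow> int" where
  "alpha i = (\<lambda>j. if j = i then 1 else 0)"

definition sigma :: "nat \<Rightarrow> nat \<Rightarrow> int" where
  "sigma n = (\<lambda>j. \<Sum>i<n. alpha i j)"

definition bdry_subgroup :: "nat \<Rightarrow> (nat \<Rightarrow> int) set" where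
  "bdry_subgroup n = {(\<lambda>j. k * 2 * sigma n j) | k::int. True}"

definition H1F :: "nat \<Rightarrow> (nat \<Rightarrow> int) set monoid" where
  "H1F n = H1hat n Mod bdry_subgroup n"

definition proj :: "nat \<Rightarrow> (nat \<Rightarrow> int) \<Rightarrow> (nat \<Rightarrow> int) set" where
  "proj n v = bdry_subgroup n #>\<^bsub>H1hat n\<^esub> v"

end

theory Submission
  imports Defs
begin

text \<open>The class of \<open>\<sigma> = \<Sum>\<alpha>\<^sub>i\<close> is the only element of order two in
  \<open>H\<^sub>1(F) = \<int>\<^sup>n/\<langle>2\<sigma>\<rangle>\<close>, so every automorphism \<open>\<phi>\<close> fixes it. Since
  \<open>\<sigma>, \<alpha>\<^sub>1, \<dots>, \<alpha>\<^sub>n\<^sub>-\<^sub>1\<close> is a basis of \<open>\<int>\<^sup>n\<close> (indices start at 0),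
  \<open>\<phi>\<close> lifts to the endomorphism \<open>\<psi>\<close> fixing \<open>\<sigma>\<close> and sending each \<open>\<alpha>\<^sub>i\<close>, \<open>i > 0\<close>,
  to a representative of \<open>\<phi>[\<alpha>\<^sub>i]\<close>. Then \<open>\<psi>\<close> fixes \<open>\<langle>2\<sigma>\<rangle>\<close> pointwise and
  induces the bijection \<open>\<phi>\<close> on the quotient, which forces \<open>\<psi>\<close> to be bijective.\<close>

lemma (in group) subgroup_equalizer:
  assumes "group K" "f \<in> hom G K" "g \<in> hom G K"
  shows "subgroup {x \<in> carrier G. f x = g x} G"
proof -
  interpret f: group_hom G K f using assms by (simp add: group_hom_def group_hom_axioms_def is_group)
  interpret g: group_hom G K g using assms by (simp add: group_hom_def group_hom_axioms_def is_group)
  show ?thesis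
    by (rule subgroupI) auto
qed

lemma (in group) iso_fixes_unique_involution:
  assumes "\<phi> \<in> iso G G" "z \<in> carrier G" "z \<otimes> z = \<one>" "z \<noteq> \<one>"
    and unique: "\<And>x. x \<in> carrier G \<Longrightarrow> x \<otimes> x = \<one> \<Longrightarrow> x = \<one> \<or> x = z"
  shows "\<phi> z = z"
proof -
  have hom: "\<phi> \<in> hom G G" and inj: "inj_on \<phi> (carrier G)"
    using assms(1) by (auto simp: iso_def bij_betw_def)
  have one: "\<phi> \<one> = \<one>"
    using hom by (simp add: hom_one is_group)
  have "\<phi> z \<otimes> \<phi> z = \<one>"
    using hom_mult[OF hom assms(2,2)] assms(3) one by simp
  moreover have "\<phi> z \<noteq> \<one>"
    using inj assms(2,4) one by (metis inj_on_eq_iff one_closed)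
  ultimately show ?thesis
    using unique hom_in_carrier[OF hom assms(2)] by blast
qed

lemma (in group) bij_betw_if_fixes_subgroup:
  assumes H: "subgroup H G" and hom: "\<psi> \<in> hom G G" and fixes_H: "\<And>h. h \<in> H \<Longrightarrow> \<psi> h = h"
    and bij: "bij_betw \<chi> (rcosets H) (rcosets H)"
    and induces: "\<And>a. a \<in> carrier G \<Longrightarrow> H #> \<psi> a = \<chi> (H #> a)"
  shows "bij_betw \<psi> (carrier G) (carrier G)"
proof -
  interpret \<psi>: group_hom G G \<psi>
    using hom by (simp add: group_hom_def group_hom_axioms_def is_group)
  have rcos: "H #> a \<in> rcosets H" if "a \<in> carrier G" for a
    using that H by (simp add: rcosetsI subgroup.subset)
  have "inj_on \<psi> (carrier G)"
  proof (subst \<psi>.inj_on_one_iff, intro allI impI)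
    fix x assume x: "x \<in> carrier G" "\<psi> x = \<one>"
    then have "\<chi> (H #> x) = \<chi> (H #> \<one>)"
      using induces[of x] induces[of \<one>] by simp
    then have "H #> x = H #> \<one>"
      using bij rcos[OF x(1)] rcos[OF one_closed] by (meson bij_betw_def inj_onD)
    then have "H #> x = H"
      using H by (simp add: coset_mult_one subgroup.subset)
    then show "x = \<one>"
      using fixes_H x coset_join1 H by metis
  qed
  moreover have "carrier G \<subseteq> \<psi> ` carrier G"
  proof
    fix w assume w: "w \<in> carrier G"
    obtain R where "R \<in> rcosets H" "H #> w = \<chi> R"
      using bij rcos[OF w] unfolding bij_betw_def by (metis imageE)
    then obtain v where "v \<in> carrier G" "H #> w = \<chi> (H #> v)"
      unfolding RCOSETS_def by blast
    then have v: "v \<in> carrier G" "H #> w = H #> \<psi> v"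
      by (simp_all add: induces)
    have "w \<in> H #> \<psi> v"
      using rcos_self[OF w H] v(2) by simp
    then have h: "w \<otimes> inv \<psi> v \<in> H"
      by (rule subgroup.rcos_module_imp[OF H is_group \<psi>.hom_closed[OF v(1)]])
    then have "w = \<psi> (w \<otimes> inv \<psi> v) \<otimes> \<psi> v"
      using w v fixes_H by (simp add: m_assoc)
    also have "\<dots> = \<psi> (w \<otimes> inv \<psi> v \<otimes> v)"
      using h v H by (simp add: subgroup.mem_carrier)
    finally show "w \<in> \<psi> ` carrier G"
      using h v H by (blast intro: subgroup.mem_carrier)
  qed
  ultimately show ?thesis
    by (auto simp: bij_betw_def)
qed

lemma carrier_H1hat: "v \<in> carrier (H1hat n) \<longleftrightarrow> (\<forall>i\<ge>n. v i = 0)"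
  by (simp add: H1hat_def)

lemma mult_H1hat [simp]: "x \<otimes>\<^bsub>H1hat n\<^esub> y = (\<lambda>i. x i + y i)"
  by (simp add: H1hat_def)

lemma one_H1hat [simp]: "\<one>\<^bsub>H1hat n\<^esub> = (\<lambda>i. 0)"
  by (simp add: H1hat_def)

lemma comm_group_H1hat: "comm_group (H1hat n)"
proof (rule comm_groupI)
  fix x assume "x \<in> carrier (H1hat n)"
  then have "(\<lambda>i. - x i) \<in> carrier (H1hat n)"
    by (simp add: carrier_H1hat)
  then show "\<exists>y \<in> carrier (H1hat n). y \<otimes>\<^bsub>H1hat n\<^esub> x = \<one>\<^bsub>H1hat n\<^esub>"
    by force
qed (auto simp: carrier_H1hat add.assoc add.commute)

interpretation H1hat: comm_group "H1hat n"
  by (rule comm_group_H1hat)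

lemma inv_H1hat: "v \<in> carrier (H1hat n) \<Longrightarrow> inv\<^bsub>H1hat n\<^esub> v = (\<lambda>i. - v i)"
  by (rule H1hat.inv_equality) (auto simp: carrier_H1hat)

lemma int_pow_H1hat:
  assumes "v \<in> carrier (H1hat n)"
  shows "v [^]\<^bsub>H1hat n\<^esub> (c::int) = (\<lambda>i. c * v i)"
proof -
  have nat_pow: "v [^]\<^bsub>H1hat n\<^esub> m = (\<lambda>i. int m * v i)" for m :: nat
    by (induction m) (auto simp: algebra_simps)
  show ?thesis
    using assms
    by (auto simp: int_pow_def2 nat_pow inv_H1hat carrier_H1hat)
qed

lemma sigma_eq: "sigma n j = (if j < n then 1 else 0)"
  unfolding sigma_def alpha_def by (simp add: sum.delta)

lemma sigma_in_carrier: "sigma n \<in> carrier (H1hat n)"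
  by (simp add: carrier_H1hat sigma_eq)

lemma alpha_in_carrier: "i < n \<Longrightarrow> alpha i \<in> carrier (H1hat n)"
  by (simp add: carrier_H1hat alpha_def)

lemma mem_bdry_subgroup: "v \<in> bdry_subgroup n \<longleftrightarrow> (\<exists>k. v = (\<lambda>j. 2 * k * sigma n j))"
  by (auto simp: bdry_subgroup_def mult.commute mult.left_commute)

lemma subgroup_bdry_subgroup: "subgroup (bdry_subgroup n) (H1hat n)"
proof (rule H1hat.subgroupI)
  show "bdry_subgroup n \<subseteq> carrier (H1hat n)"
    by (auto simp: mem_bdry_subgroup carrier_H1hat sigma_eq)
  show "bdry_subgroup n \<noteq> {}"
    by (auto simp: bdry_subgroup_def)
next
  fix a b assume "a \<in> bdry_subgroup n" "b \<in> bdry_subgroup n"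
  then obtain k l where "a = (\<lambda>j. 2 * k * sigma n j)" "b = (\<lambda>j. 2 * l * sigma n j)"
    by (auto simp: mem_bdry_subgroup)
  then show "a \<otimes>\<^bsub>H1hat n\<^esub> b \<in> bdry_subgroup n"
    by (auto simp: mem_bdry_subgroup intro!: exI[of _ "k + l"]) (simp add: algebra_simps)
next
  fix a assume "a \<in> bdry_subgroup n"
  then obtain k where "a = (\<lambda>j. 2 * k * sigma n j)"
    by (auto simp: mem_bdry_subgroup)
  then show "inv\<^bsub>H1hat n\<^esub> a \<in> bdry_subgroup n"
    by (auto simp: inv_H1hat carrier_H1hat sigma_eq mem_bdry_subgroup intro!: exI[of _ "- k"])
qed

lemma normal_bdry_subgroup: "bdry_subgroup n \<lhd> H1hat n"
  by (simp add: H1hat.subgroup_imp_normal subgroup_bdry_subgroup)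

lemma group_H1F: "group (H1F n)"
  unfolding H1F_def by (rule normal.factorgroup_is_group[OF normal_bdry_subgroup])

lemma proj_hom: "proj n \<in> hom (H1hat n) (H1F n)"
  unfolding H1F_def proj_def[abs_def] by (rule normal.r_coset_hom_Mod[OF normal_bdry_subgroup])

lemma carrier_H1F: "carrier (H1F n) = proj n ` carrier (H1hat n)"
  unfolding H1F_def proj_def[abs_def] by (rule carrier_FactGroup)

lemma proj_eq_one_iff:
  "v \<in> carrier (H1hat n) \<Longrightarrow> proj n v = \<one>\<^bsub>H1F n\<^esub> \<longleftrightarrow> v \<in> bdry_subgroup n"
  unfolding H1F_def one_FactGroup proj_def
  by (meson H1hat.coset_join1 H1hat.coset_join2 subgroup_bdry_subgroup)

text \<open>The coordinates of \<open>v\<close> in the basis \<open>sigma n, alpha 1, \<dots>, alpha (n - 1)\<close> are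
  \<open>v 0\<close> and \<open>v i - v 0\<close>; \<open>basis_map n u\<close> fixes \<open>sigma n\<close> and sends \<open>alpha i\<close> to \<open>u i\<close>.\<close>

definition basis_map :: "nat \<Rightarrow> (nat \<Rightarrow> nat \<Rightarrow> int) \<Rightarrow> (nat \<Rightarrow> int) \<Rightarrow> (nat \<Rightarrow> int)" where
  "basis_map n u v = (\<lambda>j. v 0 * sigma n j + (\<Sum>i\<in>{1..<n}. (v i - v 0) * u i j))"

lemma basis_map_in_subgroup:
  assumes "subgroup K (H1hat n)" "sigma n \<in> K" "\<And>i. i \<in> {1..<n} \<Longrightarrow> u i \<in> K"
  shows "basis_map n u v \<in> K"
proof -
  have multiple: "(\<lambda>j. c * a j) \<in> K" if "a \<in> K" for a c
    using H1hat.subgroup_int_pow_closed[OF assms(1) that, of c]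
      int_pow_H1hat[OF subgroup.mem_carrier[OF assms(1) that]] by simp
  have "(\<lambda>j. \<Sum>i\<in>I. c i * u i j) \<in> K" if "finite I" "I \<subseteq> {1..<n}" for I c
    using that
  proof (induction I rule: finite_induct)
    case empty
    show ?case using subgroup.one_closed[OF assms(1)] by simp
  next
    case (insert i I)
    then show ?case
      using subgroup.m_closed[OF assms(1) multiple[OF assms(3)]] by simp
  qed
  then show ?thesis
    unfolding basis_map_def
    using subgroup.m_closed[OF assms(1) multiple[OF assms(2)]] by simp
qed

lemma basis_map_in_carrier:
  "(\<And>i. i \<in> {1..<n} \<Longrightarrow> u i \<in> carrier (H1hat n)) \<Longrightarrow> basis_map n u v \<in> carrier (H1hat n)"
  by (rule basis_map_in_subgroup[OF H1hat.subgroup_self sigma_in_carrier])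

lemma basis_map_alpha_id: "basis_map n alpha v = v" if "v \<in> carrier (H1hat n)"
proof
  fix j
  have "(\<Sum>i\<in>{1..<n}. (v i - v 0) * alpha i j) = (if j \<in> {1..<n} then v j - v 0 else 0)"
    by (simp add: alpha_def sum.delta' if_distrib[of "\<lambda>x. _ * x"] cong: if_cong)
  then show "basis_map n alpha v j = v j"
    using that by (cases "j = 0") (auto simp: basis_map_def sigma_eq carrier_H1hat)
qed

lemma basis_map_add:
  "basis_map n u (\<lambda>j. a j + b j) = (\<lambda>j. basis_map n u a j + basis_map n u b j)"
proof
  fix j
  have "(\<Sum>i\<in>{1..<n}. (a i + b i - (a 0 + b 0)) * u i j)
      = (\<Sum>i\<in>{1..<n}. (a i - a 0) * u i j) + (\<Sum>i\<in>{1..<n}. (b i - b 0) * u i j)"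
    by (simp add: sum.distrib[symmetric] algebra_simps)
  then show "basis_map n u (\<lambda>j. a j + b j) j = basis_map n u a j + basis_map n u b j"
    by (simp add: basis_map_def algebra_simps)
qed

lemma basis_map_hom:
  "(\<And>i. i \<in> {1..<n} \<Longrightarrow> u i \<in> carrier (H1hat n)) \<Longrightarrow> basis_map n u \<in> hom (H1hat n) (H1hat n)"
  by (auto simp: hom_def basis_map_add intro!: basis_map_in_carrier)

lemma basis_map_sigma_multiple: "basis_map n u (\<lambda>j. c * sigma n j) = (\<lambda>j. c * sigma n j)"
  by (cases "n = 0") (simp_all add: basis_map_def sigma_eq)

lemma basis_map_sigma: "basis_map n u (sigma n) = sigma n"
  using basis_map_sigma_multiple[of n u 1] by simp

lemma basis_map_alpha: "i \<in> {1..<n} \<Longrightarrow> basis_map n u (alpha i) = u i"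
  by (simp add: basis_map_def alpha_def if_distrib[of "\<lambda>x. x * _"] sum.delta cong: if_cong)

lemma H1hat_hom_eqI:
  assumes "group K" "f \<in> hom (H1hat n) K" "g \<in> hom (H1hat n) K"
    and "f (sigma n) = g (sigma n)" "\<And>i. i \<in> {1..<n} \<Longrightarrow> f (alpha i) = g (alpha i)"
    and "v \<in> carrier (H1hat n)"
  shows "f v = g v"
proof -
  have "basis_map n alpha v \<in> {x \<in> carrier (H1hat n). f x = g x}"
    using assms by (intro basis_map_in_subgroup H1hat.subgroup_equalizer)
      (auto simp: sigma_in_carrier alpha_in_carrier)
  then show ?thesis
    by (simp add: basis_map_alpha_id \<open>v \<in> carrier (H1hat n)\<close>)
qed

lemma proj_mult: "a \<in> carrier (H1hat n) \<Longrightarrow> b \<in> carrier (H1hat n) \<Longrightarrow>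
    proj n a \<otimes>\<^bsub>H1F n\<^esub> proj n b = proj n (\<lambda>j. a j + b j)"
  using hom_mult[OF proj_hom] by simp

lemma proj_sigma_involution: "proj n (sigma n) \<otimes>\<^bsub>H1F n\<^esub> proj n (sigma n) = \<one>\<^bsub>H1F n\<^esub>"
proof -
  have "(\<lambda>j. sigma n j + sigma n j) \<in> bdry_subgroup n"
    by (auto simp: mem_bdry_subgroup intro!: exI[of _ 1])
  then show ?thesis
    by (simp add: proj_mult sigma_in_carrier proj_eq_one_iff carrier_H1hat sigma_eq)
qed

lemma proj_sigma_ne_one: "n \<ge> 1 \<Longrightarrow> proj n (sigma n) \<noteq> \<one>\<^bsub>H1F n\<^esub>"
proof
  assume "n \<ge> 1" "proj n (sigma n) = \<one>\<^bsub>H1F n\<^esub>"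
  then obtain k where "sigma n = (\<lambda>j. 2 * k * sigma n j)"
    by (auto simp: proj_eq_one_iff sigma_in_carrier mem_bdry_subgroup)
  from fun_cong[OF this, of 0] have "sigma n 0 = 2 * k * sigma n 0"
    by simp
  then have "1 = 2 * k"
    using \<open>n \<ge> 1\<close> by (simp add: sigma_eq)
  then show False
    by presburger
qed

lemma H1F_involution_cases:
  assumes "x \<in> carrier (H1F n)" "x \<otimes>\<^bsub>H1F n\<^esub> x = \<one>\<^bsub>H1F n\<^esub>"
  shows "x = \<one>\<^bsub>H1F n\<^esub> \<or> x = proj n (sigma n)"
proof -
  obtain v where v: "v \<in> carrier (H1hat n)" "x = proj n v"
    using assms(1) by (auto simp: carrier_H1F)
  then have "(\<lambda>j. v j + v j) \<in> bdry_subgroup n"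
    using assms(2) by (simp add: proj_mult proj_eq_one_iff carrier_H1hat)
  then obtain k where "\<And>j. v j + v j = 2 * k * sigma n j"
    by (auto simp: mem_bdry_subgroup fun_eq_iff)
  then have v_eq: "v = (\<lambda>j. k * sigma n j)"
    by (auto simp: fun_eq_iff)
  show ?thesis
  proof (cases "even k")
    case True
    then obtain m where "k = 2 * m" by blast
    then have "v \<in> bdry_subgroup n"
      by (auto simp: v_eq mem_bdry_subgroup)
    then show ?thesis
      by (simp add: v proj_eq_one_iff)
  next
    case False
    then obtain m where "k = 2 * m + 1" by (blast elim: oddE)
    let ?b = "\<lambda>j. 2 * m * sigma n j"
    have b: "?b \<in> carrier (H1hat n)" "?b \<in> bdry_subgroup n"
      by (auto simp: carrier_H1hat sigma_eq mem_bdry_subgroup)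
    have "x = proj n (\<lambda>j. ?b j + sigma n j)"
      using \<open>k = 2 * m + 1\<close> by (simp add: v v_eq algebra_simps)
    also have "\<dots> = proj n ?b \<otimes>\<^bsub>H1F n\<^esub> proj n (sigma n)"
      by (rule proj_mult[OF b(1) sigma_in_carrier, symmetric])
    also have "\<dots> = proj n (sigma n)"
      using b proj_eq_one_iff[OF b(1)]
      by (simp add: monoid.l_one[OF group.is_monoid[OF group_H1F]] carrier_H1F sigma_in_carrier)
    finally show ?thesis ..
  qed
qed

lemma iso_H1F_fixes_proj_sigma:
  "n \<ge> 1 \<Longrightarrow> \<phi> \<in> iso (H1F n) (H1F n) \<Longrightarrow> \<phi> (proj n (sigma n)) = proj n (sigma n)"
  using group.iso_fixes_unique_involution[OF group_H1F] H1F_involution_cases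
    proj_sigma_involution proj_sigma_ne_one
  by (simp add: carrier_H1F sigma_in_carrier)

lemma basis_map_lifts_hom_H1F:
  assumes \<phi>_hom: "\<phi> \<in> hom (H1F n) (H1F n)"
    and \<phi>_sigma: "\<phi> (proj n (sigma n)) = proj n (sigma n)"
  obtains u where "\<And>i. i \<in> {1..<n} \<Longrightarrow> u i \<in> carrier (H1hat n)"
    and "\<And>v. v \<in> carrier (H1hat n) \<Longrightarrow> proj n (basis_map n u v) = \<phi> (proj n v)"
proof -
  have "\<exists>w \<in> carrier (H1hat n). proj n w = \<phi> (proj n (alpha i))" if "i \<in> {1..<n}" for i
  proof -
    have "\<phi> (proj n (alpha i)) \<in> carrier (H1F n)"
      using that by (simp add: hom_in_carrier[OF \<phi>_hom] hom_in_carrier[OF proj_hom] alpha_in_carrier)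
    then show ?thesis
      by (auto simp: carrier_H1F)
  qed
  then obtain u where u: "\<And>i. i \<in> {1..<n} \<Longrightarrow>
      u i \<in> carrier (H1hat n) \<and> proj n (u i) = \<phi> (proj n (alpha i))"
    by metis
  then have "basis_map n u \<in> hom (H1hat n) (H1hat n)"
    by (auto intro!: basis_map_hom)
  then have "proj n (basis_map n u v) = \<phi> (proj n v)" if "v \<in> carrier (H1hat n)" for v
    using H1hat_hom_eqI[OF group_H1F hom_compose[OF _ proj_hom] hom_compose[OF proj_hom \<phi>_hom]]
      that \<phi>_sigma u by (simp add: basis_map_alpha basis_map_sigma)
  with u show ?thesis
    using that by blast
qed

lemma bij_betw_basis_map:
  assumes "\<And>i. i \<in> {1..<n} \<Longrightarrow> u i \<in> carrier (H1hat n)"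
    and "bij_betw \<phi> (carrier (H1F n)) (carrier (H1F n))"
    and "\<And>v. v \<in> carrier (H1hat n) \<Longrightarrow> proj n (basis_map n u v) = \<phi> (proj n v)"
  shows "bij_betw (basis_map n u) (carrier (H1hat n)) (carrier (H1hat n))"
proof (rule H1hat.bij_betw_if_fixes_subgroup[OF subgroup_bdry_subgroup basis_map_hom])
  show "basis_map n u h = h" if "h \<in> bdry_subgroup n" for h
    using that by (auto simp: mem_bdry_subgroup basis_map_sigma_multiple)
  show "bij_betw \<phi> (rcosets\<^bsub>H1hat n\<^esub> bdry_subgroup n) (rcosets\<^bsub>H1hat n\<^esub> bdry_subgroup n)"
    using assms(2) by (simp add: H1F_def FactGroup_def)
  show "bdry_subgroup n #>\<^bsub>H1hat n\<^esub> basis_map n u a = \<phi> (bdry_subgroup n #>\<^bsub>H1hat n\<^esub> a)"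
    if "a \<in> carrier (H1hat n)" for a
    using assms(3)[OF that] by (simp add: proj_def)
qed (use assms(1) in auto)

theorem lemma2p1:
  fixes n :: nat and \<phi> :: "(nat \<Rightarrow> int) set \<Rightarrow> (nat \<Rightarrow> int) set"
  assumes "n \<ge> 1"
    and "\<phi> \<in> iso (H1F n) (H1F n)"
  shows "\<exists>\<psi> \<in> iso (H1hat n) (H1hat n).
           (\<forall>v \<in> carrier (H1hat n). proj n (\<psi> v) = \<phi> (proj n v))
           \<and> \<psi> (sigma n) = sigma n"
proof -
  have \<phi>_hom: "\<phi> \<in> hom (H1F n) (H1F n)"
    and \<phi>_bij: "bij_betw \<phi> (carrier (H1F n)) (carrier (H1F n))"
    using assms(2) by (auto simp: iso_def)
  obtain u where u: "\<And>i. i \<in> {1..<n} \<Longrightarrow> u i \<in> carrier (H1hat n)"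
    and lifts: "\<And>v. v \<in> carrier (H1hat n) \<Longrightarrow> proj n (basis_map n u v) = \<phi> (proj n v)"
    using basis_map_lifts_hom_H1F[OF \<phi>_hom iso_H1F_fixes_proj_sigma[OF assms]] by blast
  have "basis_map n u \<in> iso (H1hat n) (H1hat n)"
    using basis_map_hom[OF u] bij_betw_basis_map[OF u \<phi>_bij lifts] by (simp add: iso_def)
  then show ?thesis
    using lifts basis_map_sigma by blast
qed

end
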